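(* Let $\boldsymbol{\nu}$ be a bandit instance with $\nu_a=\mathrm{Bernoulli}(\mu_a)$ and $\mu_1>\mu_2\ge\dots\ge\mu_K$. Let $\Delta_a=\mu_1-\mu_a$ and $\Delta_{\min}=\min_{a\ne1}\Delta_a$. Then $$T^\star_{\mathrm{TV}}(\boldsymbol{\nu})=\frac{1}{\Delta_{\min}}+\sum_{a=2}^K\frac{1}{\Delta_a},\qquad\text{and}\qquad \frac{1}{\Delta_{\min}}\le T^\star_{\mathrm{TV}}(\boldsymbol{\nu})\le\frac{K}{\Delta_{\min}}.$$
   Context: $\big(T^\star_{\mathrm{TV}}(\boldsymbol{\nu})\big)^{-1}=\sup_{\omega\in\Sigma_K}\inf_{\boldsymbol{\lambda}\in\operatorname{Alt}(\boldsymbol{\nu})}\sum_{a=1}^K\omega_a\mathrm{TV}(\nu_a,\lambda_a)$, where $\Sigma_K$ is the probability simplex in $\mathbb{R}^K$, $\mathrm{TV}(P,Q)=\sup_A(P(A)-Q(A))$, and $\operatorname{Alt}(\boldsymbol{\nu})$ is the set of Bernoulli instances $\boldsymbol{\lambda}=(\mathrm{Bernoulli}(\rho_a))_{a\in[K]}$ whose optimal arm (arm of largest mean) differs from that of $\boldsymbol{\nu}$. *)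

theory Defs
  imports "HOL-Probability.Probability"
begin

definition TV :: "'a pmf \<Rightarrow> 'a pmf \<Rightarrow> real" where
  "TV P Q = (SUP A. measure_pmf.prob P A - measure_pmf.prob Q A)"

text \<open>Bandit instances with K arms indexed 1..K, given by the Bernoulli means.\<close>
definition bern_instance :: "nat \<Rightarrow> (nat \<Rightarrow> real) \<Rightarrow> bool" where
  "bern_instance K \<rho> \<longleftrightarrow> (\<forall>a\<in>{1..K}. 0 \<le> \<rho> a \<and> \<rho> a \<le> 1)"

definition opt_arms :: "nat \<Rightarrow> (nat \<Rightarrow> real) \<Rightarrow> nat set" where
  "opt_arms K \<rho> = {a\<in>{1..K}. \<forall>b\<in>{1..K}. \<rho> b \<le> \<rho> a}"

definition Alt :: "nat \<Rightarrow> (nat \<Rightarrow> real) \<Rightarrow> (nat \<Rightarrow> real) set" where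
  "Alt K \<mu> = {\<rho>. bern_instance K \<rho> \<and> opt_arms K \<rho> \<inter> opt_arms K \<mu> = {}}"

definition prob_simplex :: "nat \<Rightarrow> (nat \<Rightarrow> real) set" where
  "prob_simplex K = {\<omega>. (\<forall>a\<in>{1..K}. 0 \<le> \<omega> a) \<and> (\<Sum>a=1..K. \<omega> a) = 1}"

definition T_TV :: "nat \<Rightarrow> (nat \<Rightarrow> real) \<Rightarrow> real" where
  "T_TV K \<mu> = 1 / (SUP \<omega>\<in>prob_simplex K. INF \<rho>\<in>Alt K \<mu>.
      \<Sum>a=1..K. \<omega> a * TV (bernoulli_pmf (\<mu> a)) (bernoulli_pmf (\<rho> a)))"

end

theory Submission
  imports Defs
begin

text \<open>Between Bernoulli laws the total variation distance is the distance of the means. An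
  alternative instance must lift some arm \<open>b \<noteq> 1\<close> above arm 1, which costs at least
  \<open>min \<omega>\<^sub>1 \<omega>\<^sub>b \<cdot> \<Delta>\<^sub>b\<close>; moving the lighter-weighted of the two arms across the gap and the other one
  by an arbitrarily small margin shows that this is sharp, so the inner infimum is
  \<open>min\<^sub>b min \<omega>\<^sub>1 \<omega>\<^sub>b \<cdot> \<Delta>\<^sub>b\<close>. Maximising over the simplex equalises all these terms:
  \<open>\<omega>\<^sub>b \<propto> 1/\<Delta>\<^sub>b\<close> for \<open>b \<noteq> 1\<close> and \<open>\<omega>\<^sub>1 \<propto> 1/\<Delta>\<^sub>m\<^sub>i\<^sub>n\<close>. A weight vector doing better would exceed
  these weights at every arm and so have total mass above 1.\<close>

lemma measure_bernoulli_pmf: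
  assumes "0 \<le> p" "p \<le> 1"
  shows "measure_pmf.prob (bernoulli_pmf p) A =
      (if True \<in> A then p else 0) + (if False \<in> A then 1 - p else 0)"
proof -
  have "A \<in> Pow {True, False}"
    by auto
  then have "A = {} \<or> A = {True} \<or> A = {False} \<or> A = {True, False}"
    by auto
  then show ?thesis
    using assms by (auto simp: measure_measure_pmf_finite)
qed

lemma TV_bernoulli_pmf:
  assumes "0 \<le> p" "p \<le> 1" "0 \<le> q" "q \<le> 1"
  shows "TV (bernoulli_pmf p) (bernoulli_pmf q) = \<bar>p - q\<bar>"
proof -
  define f where
    "f A = measure_pmf.prob (bernoulli_pmf p) A - measure_pmf.prob (bernoulli_pmf q) A" for A
  have f: "f A = (if True \<in> A then p - q else 0) + (if False \<in> A then q - p else 0)" for A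
    using measure_bernoulli_pmf[OF assms(1,2)] measure_bernoulli_pmf[OF assms(3,4)]
    by (simp add: f_def)
  have "\<bar>p - q\<bar> = f (if q \<le> p then {True} else {False})"
    using f by simp
  then have "\<bar>p - q\<bar> \<in> range f"
    by (metis rangeI)
  moreover have "x \<le> \<bar>p - q\<bar>" if "x \<in> range f" for x
    using that f by auto
  ultimately show ?thesis
    unfolding TV_def f_def[symmetric] by (rule cSup_eq_maximum)
qed

definition weighted_mean_dist ::
    "nat \<Rightarrow> (nat \<Rightarrow> real) \<Rightarrow> (nat \<Rightarrow> real) \<Rightarrow> (nat \<Rightarrow> real) \<Rightarrow> real" where
  "weighted_mean_dist K \<omega> \<mu> \<rho> = (\<Sum>a=1..K. \<omega> a * \<bar>\<mu> a - \<rho> a\<bar>)"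

lemma T_TV_eq_weighted_mean_dist:
  assumes "bern_instance K \<mu>"
  shows "T_TV K \<mu> =
    1 / (SUP \<omega>\<in>prob_simplex K. INF \<rho>\<in>Alt K \<mu>. weighted_mean_dist K \<omega> \<mu> \<rho>)"
proof -
  have "\<omega> a * TV (bernoulli_pmf (\<mu> a)) (bernoulli_pmf (\<rho> a)) = \<omega> a * \<bar>\<mu> a - \<rho> a\<bar>"
    if "\<rho> \<in> Alt K \<mu>" "a \<in> {1..K}" for \<omega> \<rho> a
    using that assms by (simp add: TV_bernoulli_pmf Alt_def bern_instance_def)
  then have "(INF \<rho>\<in>Alt K \<mu>. \<Sum>a=1..K. \<omega> a * TV (bernoulli_pmf (\<mu> a)) (bernoulli_pmf (\<rho> a)))
      = (INF \<rho>\<in>Alt K \<mu>. weighted_mean_dist K \<omega> \<mu> \<rho>)" for \<omega>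
    unfolding weighted_mean_dist_def by (intro INF_cong sum.cong refl) simp_all
  then show ?thesis
    unfolding T_TV_def by simp
qed

lemma MIN_attained:
  assumes "finite A" "A \<noteq> {}"
  obtains a where "a \<in> A" "(MIN x\<in>A. f x) = f a"
proof -
  have "(MIN x\<in>A. f x) \<in> f ` A"
    using assms by (intro Min_in) auto
  then show ?thesis
    using that by blast
qed

lemma le_of_le_plus_small_multiple:
  fixes x y c d :: real
  assumes "0 \<le> c" "0 < d" "\<And>\<delta>. 0 < \<delta> \<Longrightarrow> \<delta> \<le> d \<Longrightarrow> x \<le> y + c * \<delta>"
  shows "x \<le> y"
proof (rule field_le_epsilon)
  fix e :: real
  assume "0 < e"
  define \<delta> where "\<delta> = min d (e / (c + 1))"
  have "c * \<delta> \<le> c * (e / (c + 1))"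
    using \<open>0 \<le> c\<close> by (intro mult_left_mono) (simp_all add: \<delta>_def)
  also have "\<dots> \<le> e"
    using \<open>0 \<le> c\<close> \<open>0 < e\<close> by (simp add: field_simps)
  finally show "x \<le> y + e"
    using assms(3)[of \<delta>] \<open>0 < d\<close> \<open>0 < e\<close> \<open>0 \<le> c\<close> by (simp add: \<delta>_def)
qed

context
  fixes K :: nat and \<mu> :: "nat \<Rightarrow> real"
  assumes two_arms: "K \<ge> 2"
    and bern: "bern_instance K \<mu>"
    and arm1_best: "\<And>b. b \<in> {2..K} \<Longrightarrow> \<mu> b < \<mu> 1"
begin

lemma opt_arms_eq_arm1: "opt_arms K \<mu> = {1}"
proof -
  have "a = 1" if "a \<in> opt_arms K \<mu>" for a
  proof (rule ccontr)
    assume "a \<noteq> 1"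
    with that have "a \<in> {2..K}" "\<mu> 1 \<le> \<mu> a"
      using two_arms by (auto simp: opt_arms_def)
    then show False
      using arm1_best[of a] by simp
  qed
  moreover have "\<mu> b \<le> \<mu> 1" if "b \<in> {1..K}" for b
    using that arm1_best[of b] by (cases "b = 1") auto
  then have "1 \<in> opt_arms K \<mu>"
    using two_arms by (simp add: opt_arms_def)
  ultimately show ?thesis
    by blast
qed

lemma Alt_iff_arm_above_arm1:
  "\<rho> \<in> Alt K \<mu> \<longleftrightarrow> bern_instance K \<rho> \<and> (\<exists>b\<in>{2..K}. \<rho> 1 < \<rho> b)"
proof -
  have "opt_arms K \<rho> \<inter> {1} = {} \<longleftrightarrow> (\<exists>b\<in>{1..K}. \<rho> 1 < \<rho> b)"
    using two_arms by (auto simp: opt_arms_def not_le)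
  also have "\<dots> \<longleftrightarrow> (\<exists>b\<in>{2..K}. \<rho> 1 < \<rho> b)"
    by (metis atLeastAtMost_iff less_irrefl not_less_eq_eq Suc_1 one_le_numeral order_trans le_antisym)
  finally show ?thesis
    unfolding Alt_def opt_arms_eq_arm1 by simp
qed

lemma weighted_mean_dist_two_arms:
  assumes "b \<in> {2..K}" "\<And>a. a \<noteq> 1 \<Longrightarrow> a \<noteq> b \<Longrightarrow> \<rho> a = \<mu> a"
  shows "weighted_mean_dist K \<omega> \<mu> \<rho> = \<omega> 1 * \<bar>\<mu> 1 - \<rho> 1\<bar> + \<omega> b * \<bar>\<mu> b - \<rho> b\<bar>"
proof -
  have "weighted_mean_dist K \<omega> \<mu> \<rho> = (\<Sum>a\<in>{1, b}. \<omega> a * \<bar>\<mu> a - \<rho> a\<bar>)"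
    unfolding weighted_mean_dist_def
    by (rule sum.mono_neutral_right) (use assms two_arms in auto)
  then show ?thesis
    using assms(1) by simp
qed

lemma Min_gap_le_weighted_mean_dist:
  assumes "\<And>a. a \<in> {1..K} \<Longrightarrow> 0 \<le> \<omega> a" and "\<rho> \<in> Alt K \<mu>"
  shows "(MIN b\<in>{2..K}. min (\<omega> 1) (\<omega> b) * (\<mu> 1 - \<mu> b)) \<le> weighted_mean_dist K \<omega> \<mu> \<rho>"
proof -
  obtain b where b: "b \<in> {2..K}" "\<rho> 1 < \<rho> b"
    using assms(2) Alt_iff_arm_above_arm1 by auto
  have "(MIN b\<in>{2..K}. min (\<omega> 1) (\<omega> b) * (\<mu> 1 - \<mu> b)) \<le> min (\<omega> 1) (\<omega> b) * (\<mu> 1 - \<mu> b)"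
    using b(1) by (intro Min_le) auto
  also have "\<dots> \<le> min (\<omega> 1) (\<omega> b) * (\<bar>\<mu> 1 - \<rho> 1\<bar> + \<bar>\<mu> b - \<rho> b\<bar>)"
    using assms(1) two_arms b by (intro mult_left_mono) auto
  also have "\<dots> \<le> \<omega> 1 * \<bar>\<mu> 1 - \<rho> 1\<bar> + \<omega> b * \<bar>\<mu> b - \<rho> b\<bar>"
    by (simp add: distrib_left add_mono mult_right_mono)
  also have "\<dots> = (\<Sum>a\<in>{1, b}. \<omega> a * \<bar>\<mu> a - \<rho> a\<bar>)"
    using b(1) by simp
  also have "\<dots> \<le> weighted_mean_dist K \<omega> \<mu> \<rho>"
    unfolding weighted_mean_dist_def
    by (rule sum_mono2) (use assms(1) b(1) two_arms in auto)
  finally show ?thesis .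
qed

lemma exists_Alt_weighted_mean_dist_le:
  assumes "\<And>a. a \<in> {1..K} \<Longrightarrow> 0 \<le> \<omega> a" and b: "b \<in> {2..K}"
    and "0 < \<delta>" "\<delta> \<le> \<mu> 1 - \<mu> b"
  shows "\<exists>\<rho>\<in>Alt K \<mu>. weighted_mean_dist K \<omega> \<mu> \<rho>
           \<le> min (\<omega> 1) (\<omega> b) * (\<mu> 1 - \<mu> b) + (\<omega> 1 + \<omega> b) * \<delta>"
proof -
  have b1: "b \<noteq> 1" and "b \<in> {1..K}" "1 \<in> {1..K}"
    using b two_arms by auto
  then have \<omega>: "0 \<le> \<omega> 1" "0 \<le> \<omega> b" and \<mu>: "0 \<le> \<mu> 1" "\<mu> 1 \<le> 1" "0 \<le> \<mu> b" "\<mu> b \<le> 1"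
    using assms(1) bern by (auto simp: bern_instance_def)
  define r1 where "r1 = (if \<omega> 1 \<le> \<omega> b then \<mu> b else \<mu> 1 - \<delta>)"
  define rb where "rb = (if \<omega> 1 \<le> \<omega> b then \<mu> b + \<delta> else \<mu> 1)"
  define \<rho> where "\<rho> = \<mu>(1 := r1, b := rb)"
  have r: "0 \<le> r1" "r1 < rb" "rb \<le> 1"
    using assms(3,4) \<mu> by (simp_all add: r1_def rb_def)
  have "bern_instance K \<rho>"
    using bern r unfolding bern_instance_def \<rho>_def by simp
  moreover have "\<rho> 1 < \<rho> b"
    using b1 r by (simp add: \<rho>_def)
  ultimately have alt: "\<rho> \<in> Alt K \<mu>"
    using b Alt_iff_arm_above_arm1 by blast
  have "weighted_mean_dist K \<omega> \<mu> \<rho> = \<omega> 1 * \<bar>\<mu> 1 - r1\<bar> + \<omega> b * \<bar>\<mu> b - rb\<bar>"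
    using b1 by (subst weighted_mean_dist_two_arms[OF b]) (simp_all add: \<rho>_def)
  also have "\<dots> \<le> min (\<omega> 1) (\<omega> b) * (\<mu> 1 - \<mu> b) + (\<omega> 1 + \<omega> b) * \<delta>"
    using assms(3,4) \<omega> by (simp add: r1_def rb_def min_def algebra_simps)
  finally show ?thesis
    using alt by blast
qed

lemma INF_Alt_weighted_mean_dist:
  assumes nonneg: "\<And>a. a \<in> {1..K} \<Longrightarrow> 0 \<le> \<omega> a"
  shows "(INF \<rho>\<in>Alt K \<mu>. weighted_mean_dist K \<omega> \<mu> \<rho>)
       = (MIN b\<in>{2..K}. min (\<omega> 1) (\<omega> b) * (\<mu> 1 - \<mu> b))"
proof (rule antisym)
  have "2 \<in> {2..K}"
    using two_arms by simp
  then have "Alt K \<mu> \<noteq> {}"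
    using exists_Alt_weighted_mean_dist_le[where \<omega> = \<omega> and b = 2 and \<delta> = "\<mu> 1 - \<mu> 2", OF nonneg]
      arm1_best by auto
  then show "(MIN b\<in>{2..K}. min (\<omega> 1) (\<omega> b) * (\<mu> 1 - \<mu> b))
      \<le> (INF \<rho>\<in>Alt K \<mu>. weighted_mean_dist K \<omega> \<mu> \<rho>)"
    using Min_gap_le_weighted_mean_dist[where \<omega> = \<omega>, OF nonneg] by (rule cINF_greatest)
next
  have "finite {2..K}" "{2..K} \<noteq> {}"
    using two_arms by auto
  then obtain b where b: "b \<in> {2..K}"
    and Min_eq: "(MIN b\<in>{2..K}. min (\<omega> 1) (\<omega> b) * (\<mu> 1 - \<mu> b)) = min (\<omega> 1) (\<omega> b) * (\<mu> 1 - \<mu> b)"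
    by (rule MIN_attained)
  have "0 \<le> \<omega> 1 + \<omega> b" "0 < \<mu> 1 - \<mu> b"
    using nonneg b two_arms arm1_best by auto
  moreover have "(INF \<rho>\<in>Alt K \<mu>. weighted_mean_dist K \<omega> \<mu> \<rho>)
      \<le> min (\<omega> 1) (\<omega> b) * (\<mu> 1 - \<mu> b) + (\<omega> 1 + \<omega> b) * \<delta>"
    if \<delta>: "0 < \<delta>" "\<delta> \<le> \<mu> 1 - \<mu> b" for \<delta>
  proof -
    obtain \<rho> where "\<rho> \<in> Alt K \<mu>"
      and "weighted_mean_dist K \<omega> \<mu> \<rho> \<le> min (\<omega> 1) (\<omega> b) * (\<mu> 1 - \<mu> b) + (\<omega> 1 + \<omega> b) * \<delta>"
      using exists_Alt_weighted_mean_dist_le[where \<omega> = \<omega>, OF nonneg b \<delta>] by blast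
    moreover have "bdd_below (weighted_mean_dist K \<omega> \<mu> ` Alt K \<mu>)"
      using nonneg by (intro bdd_belowI2[of _ 0]) (auto simp: weighted_mean_dist_def intro!: sum_nonneg)
    ultimately show ?thesis
      by (meson cINF_lower order.trans)
  qed
  ultimately show "(INF \<rho>\<in>Alt K \<mu>. weighted_mean_dist K \<omega> \<mu> \<rho>)
      \<le> (MIN b\<in>{2..K}. min (\<omega> 1) (\<omega> b) * (\<mu> 1 - \<mu> b))"
    unfolding Min_eq by (rule le_of_le_plus_small_multiple)
qed

end

definition gap_complexity :: "nat \<Rightarrow> (nat \<Rightarrow> real) \<Rightarrow> real" where
  "gap_complexity K \<Delta> = 1 / Min (\<Delta> ` {2..K}) + (\<Sum>b=2..K. 1 / \<Delta> b)"

definition optimal_weights :: "nat \<Rightarrow> (nat \<Rightarrow> real) \<Rightarrow> nat \<Rightarrow> real" where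
  "optimal_weights K \<Delta> a = 1 / (gap_complexity K \<Delta> * (if a = 1 then Min (\<Delta> ` {2..K}) else \<Delta> a))"

context
  fixes K :: nat and \<Delta> :: "nat \<Rightarrow> real"
  assumes two_arms: "K \<ge> 2"
    and gaps_pos: "\<And>b. b \<in> {2..K} \<Longrightarrow> 0 < \<Delta> b"
begin

lemma Min_gap_attained: obtains b where "b \<in> {2..K}" "Min (\<Delta> ` {2..K}) = \<Delta> b"
proof (rule MIN_attained)
  show "finite {2..K}" "{2..K} \<noteq> {}"
    using two_arms by auto
qed

lemma Min_gap_pos: "0 < Min (\<Delta> ` {2..K})"
  using Min_gap_attained gaps_pos by metis

lemma gap_complexity_pos: "0 < gap_complexity K \<Delta>"
  unfolding gap_complexity_def
  using Min_gap_pos gaps_pos by (intro add_pos_nonneg sum_nonneg) (auto simp: less_imp_le)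

lemma sum_optimal_weights: "(\<Sum>a=1..K. optimal_weights K \<Delta> a) = 1"
proof -
  have "{1..K} = insert 1 {2..K}"
    using two_arms by auto
  then have "(\<Sum>a=1..K. optimal_weights K \<Delta> a)
      = 1 / gap_complexity K \<Delta> * gap_complexity K \<Delta>"
    by (simp add: optimal_weights_def gap_complexity_def sum_distrib_left distrib_left)
  then show ?thesis
    using gap_complexity_pos by simp
qed

lemma optimal_weights_in_prob_simplex: "optimal_weights K \<Delta> \<in> prob_simplex K"
  using sum_optimal_weights gap_complexity_pos Min_gap_pos gaps_pos
  by (auto simp: prob_simplex_def optimal_weights_def less_imp_le)

lemma min_optimal_weights_gap:
  assumes "b \<in> {2..K}"
  shows "min (optimal_weights K \<Delta> 1) (optimal_weights K \<Delta> b) * \<Delta> b = 1 / gap_complexity K \<Delta>"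
proof -
  have "b \<noteq> 1" "0 < \<Delta> b"
    using assms gaps_pos by auto
  moreover have "optimal_weights K \<Delta> b \<le> optimal_weights K \<Delta> 1"
    using assms gap_complexity_pos Min_gap_pos
    by (auto simp: optimal_weights_def intro!: divide_left_mono mult_left_mono)
  then have "min (optimal_weights K \<Delta> 1) (optimal_weights K \<Delta> b) = optimal_weights K \<Delta> b"
    by (rule min_absorb2)
  ultimately show ?thesis
    by (simp add: optimal_weights_def)
qed

lemma optimal_weights_less:
  assumes beat: "\<And>b. b \<in> {2..K} \<Longrightarrow> 1 / gap_complexity K \<Delta> < min (\<omega> 1) (\<omega> b) * \<Delta> b"
    and a: "a \<in> {1..K}"
  shows "optimal_weights K \<Delta> a < \<omega> a"
proof -
  let ?S = "gap_complexity K \<Delta>"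
  obtain b where b: "b \<in> {2..K}" "1 / ?S < \<omega> a * \<Delta> b" "optimal_weights K \<Delta> a = 1 / (?S * \<Delta> b)"
  proof (cases "a = 1")
    case True
    obtain b where b: "b \<in> {2..K}" "Min (\<Delta> ` {2..K}) = \<Delta> b"
      using Min_gap_attained .
    have "min (\<omega> 1) (\<omega> b) * \<Delta> b \<le> \<omega> 1 * \<Delta> b"
      using gaps_pos[OF b(1)] by (intro mult_right_mono) simp_all
    then have "1 / ?S < \<omega> a * \<Delta> b"
      using beat[OF b(1)] True by simp
    moreover have "optimal_weights K \<Delta> a = 1 / (?S * \<Delta> b)"
      using True b(2) by (simp add: optimal_weights_def)
    ultimately show ?thesis
      using that b(1) by blast
  next
    case False
    then have a2: "a \<in> {2..K}"
      using a by auto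
    have "min (\<omega> 1) (\<omega> a) * \<Delta> a \<le> \<omega> a * \<Delta> a"
      using gaps_pos[OF a2] by (intro mult_right_mono) simp_all
    then have "1 / ?S < \<omega> a * \<Delta> a"
      using beat[OF a2] by linarith
    moreover have "optimal_weights K \<Delta> a = 1 / (?S * \<Delta> a)"
      using False by (simp add: optimal_weights_def)
    ultimately show ?thesis
      using that a2 by blast
  qed
  then show ?thesis
    using gaps_pos[OF b(1)] by (metis divide_divide_eq_left pos_divide_less_eq)
qed

lemma Min_gap_le_inverse_gap_complexity:
  assumes "\<omega> \<in> prob_simplex K"
  shows "(MIN b\<in>{2..K}. min (\<omega> 1) (\<omega> b) * \<Delta> b) \<le> 1 / gap_complexity K \<Delta>"
proof (rule ccontr)
  assume low: "\<not> ?thesis"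
  have "1 / gap_complexity K \<Delta> < min (\<omega> 1) (\<omega> b) * \<Delta> b" if "b \<in> {2..K}" for b
  proof -
    have "(MIN b\<in>{2..K}. min (\<omega> 1) (\<omega> b) * \<Delta> b) \<le> min (\<omega> 1) (\<omega> b) * \<Delta> b"
      using that by (intro Min_le) auto
    then show ?thesis
      using low by linarith
  qed
  then have "(\<Sum>a=1..K. optimal_weights K \<Delta> a) < (\<Sum>a=1..K. \<omega> a)"
    using two_arms optimal_weights_less by (intro sum_strict_mono) auto
  then show False
    using assms sum_optimal_weights by (simp add: prob_simplex_def)
qed

lemma SUP_prob_simplex_Min_gap:
  "(SUP \<omega>\<in>prob_simplex K. MIN b\<in>{2..K}. min (\<omega> 1) (\<omega> b) * \<Delta> b) = 1 / gap_complexity K \<Delta>"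
proof (rule cSup_eq_maximum)
  have "(\<lambda>b. min (optimal_weights K \<Delta> 1) (optimal_weights K \<Delta> b) * \<Delta> b) ` {2..K}
      = {1 / gap_complexity K \<Delta>}"
    using two_arms min_optimal_weights_gap by force
  then have "1 / gap_complexity K \<Delta>
      = (MIN b\<in>{2..K}. min (optimal_weights K \<Delta> 1) (optimal_weights K \<Delta> b) * \<Delta> b)"
    by simp
  from this optimal_weights_in_prob_simplex
  show "1 / gap_complexity K \<Delta>
      \<in> (\<lambda>\<omega>. MIN b\<in>{2..K}. min (\<omega> 1) (\<omega> b) * \<Delta> b) ` prob_simplex K"
    by (rule image_eqI)
next
  fix x
  assume "x \<in> (\<lambda>\<omega>. MIN b\<in>{2..K}. min (\<omega> 1) (\<omega> b) * \<Delta> b) ` prob_simplex K"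
  then obtain \<omega> where "\<omega> \<in> prob_simplex K" "x = (MIN b\<in>{2..K}. min (\<omega> 1) (\<omega> b) * \<Delta> b)"
    by (rule imageE)
  then show "x \<le> 1 / gap_complexity K \<Delta>"
    using Min_gap_le_inverse_gap_complexity by simp
qed

lemma gap_complexity_bounds:
  "1 / Min (\<Delta> ` {2..K}) \<le> gap_complexity K \<Delta>"
  "gap_complexity K \<Delta> \<le> real K / Min (\<Delta> ` {2..K})"
proof -
  let ?m = "Min (\<Delta> ` {2..K})"
  show "1 / ?m \<le> gap_complexity K \<Delta>"
    using gaps_pos by (auto simp: gap_complexity_def less_imp_le intro!: sum_nonneg)
  have "(\<Sum>b=2..K. 1 / \<Delta> b) \<le> (\<Sum>b=2..K. 1 / ?m)"
    using gaps_pos Min_gap_pos by (intro sum_mono divide_left_mono) auto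
  also have "\<dots> = (real K - 1) / ?m"
    using two_arms by (simp add: of_nat_diff)
  finally show "gap_complexity K \<Delta> \<le> real K / ?m"
    by (simp add: gap_complexity_def diff_divide_distrib)
qed

end

theorem proposition1:
  fixes K :: nat and \<mu> :: "nat \<Rightarrow> real"
  assumes "K \<ge> 2"
    and "bern_instance K \<mu>"
    and "\<mu> 1 > \<mu> 2"
    and "\<And>a b. 2 \<le> a \<Longrightarrow> a \<le> b \<Longrightarrow> b \<le> K \<Longrightarrow> \<mu> b \<le> \<mu> a"
  defines "\<Delta>min \<equiv> Min ((\<lambda>a. \<mu> 1 - \<mu> a) ` {2..K})"
  shows "T_TV K \<mu> = 1 / \<Delta>min + (\<Sum>a=2..K. 1 / (\<mu> 1 - \<mu> a))
       \<and> 1 / \<Delta>min \<le> T_TV K \<mu> \<and> T_TV K \<mu> \<le> real K / \<Delta>min"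
proof -
  have arm1_best: "\<mu> b < \<mu> 1" if "b \<in> {2..K}" for b
    using that assms(3) assms(4)[of 2 b] by auto
  have "T_TV K \<mu> = 1 / (SUP \<omega>\<in>prob_simplex K. INF \<rho>\<in>Alt K \<mu>. weighted_mean_dist K \<omega> \<mu> \<rho>)"
    using assms(2) by (rule T_TV_eq_weighted_mean_dist)
  also have "\<dots> = 1 / (SUP \<omega>\<in>prob_simplex K. MIN b\<in>{2..K}. min (\<omega> 1) (\<omega> b) * (\<mu> 1 - \<mu> b))"
    using INF_Alt_weighted_mean_dist[OF assms(1,2) arm1_best]
    by (auto simp: prob_simplex_def intro!: arg_cong[where f = "\<lambda>x. 1 / x"] SUP_cong)
  also have "\<dots> = gap_complexity K (\<lambda>b. \<mu> 1 - \<mu> b)"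
    using SUP_prob_simplex_Min_gap[OF assms(1)] arm1_best by simp
  finally have "T_TV K \<mu> = gap_complexity K (\<lambda>b. \<mu> 1 - \<mu> b)" .
  then show ?thesis
    using gap_complexity_bounds[OF assms(1), of "\<lambda>b. \<mu> 1 - \<mu> b"] arm1_best
    by (simp add: \<Delta>min_def gap_complexity_def)
qed

end
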